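(* Let $n\in\mathbb{N}$ and let $a_1,\ldots,a_n\ge0$ satisfy $\sum_{j=1}^n a_j=n$. Let $$\mathcal{E}=\Big\{x=(x_1,\ldots,x_n)^t\in\mathbb{R}^n\;\Big|\;\sum_{j=1}^n a_jx_j^2=1\Big\}.$$ Then there is an orthonormal basis $v_1,\ldots,v_n$ of $\mathbb{R}^n$ with $v_j\in\mathcal{E}$ for all $j$. *)

theory Defs
  imports "HOL-Analysis.Analysis"
begin

end

theory Submission
  imports Defs
begin

text \<open>
  Write the ellipsoid as the level set \<open>q x = 1\<close> of the quadratic form \<open>q x = (a * x) \<bullet> x\<close>,
  where \<open>a * x\<close> is the componentwise product. On every orthonormal basis the values of \<open>q\<close>
  sum to the trace \<open>n\<close>, so as long as some basis vector lies off the ellipsoid there are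
  \<open>v\<^sub>i, v\<^sub>j\<close> with \<open>q v\<^sub>i < 1 < q v\<^sub>j\<close>. Rotating the pair \<open>(v\<^sub>i, v\<^sub>j)\<close> in its plane keeps
  the basis orthonormal and leaves \<open>q v\<^sub>i + q v\<^sub>j\<close> unchanged, and by the intermediate value
  theorem some angle puts the rotated \<open>v\<^sub>i\<close> on the ellipsoid. Each such rotation lowers the
  number of basis vectors off the ellipsoid.
\<close>

definition orthonormal_on :: "'i set \<Rightarrow> ('i \<Rightarrow> 'a::real_inner) \<Rightarrow> bool" where
  "orthonormal_on I w \<longleftrightarrow> (\<forall>i\<in>I. \<forall>j\<in>I. w i \<bullet> w j = (if i = j then 1 else 0))"

lemma orthonormal_on_rotate:
  assumes w: "orthonormal_on I w" and ij: "i \<in> I" "j \<in> I" "i \<noteq> j"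
    and cs: "c\<^sup>2 + s\<^sup>2 = 1"
  shows "orthonormal_on I (w(i := c *\<^sub>R w i + s *\<^sub>R w j, j := (- s) *\<^sub>R w i + c *\<^sub>R w j))"
  unfolding orthonormal_on_def
proof (intro ballI)
  fix k l assume kl: "k \<in> I" "l \<in> I"
  have w_kl: "w k \<bullet> w l = (if k = l then 1 else 0)" if "k \<in> I" "l \<in> I" for k l
    using w that by (simp add: orthonormal_on_def)
  show "(w(i := c *\<^sub>R w i + s *\<^sub>R w j, j := (- s) *\<^sub>R w i + c *\<^sub>R w j)) k \<bullet>
        (w(i := c *\<^sub>R w i + s *\<^sub>R w j, j := (- s) *\<^sub>R w i + c *\<^sub>R w j)) l =
        (if k = l then 1 else 0)"
    using ij kl cs w_kl[of i i] w_kl[of j j] w_kl[of i j] w_kl[of j i]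
      w_kl[of k i] w_kl[of k j] w_kl[of i l] w_kl[of j l] w_kl[of k l]
    by (cases "k = i"; cases "k = j"; cases "l = i"; cases "l = j")
       (auto simp: power2_eq_square algebra_simps)
qed

lemma orthonormal_on_span_UNIV:
  fixes v :: "'i \<Rightarrow> 'a::euclidean_space"
  assumes v: "orthonormal_on I v" and card: "card I = DIM('a)"
  shows "span (v ` I) = UNIV"
proof -
  have v_kl: "v k \<bullet> v l = (if k = l then 1 else 0)" if "k \<in> I" "l \<in> I" for k l
    using v that by (simp add: orthonormal_on_def)
  have inj: "inj_on v I"
    by (rule inj_onI) (metis v_kl zero_neq_one)
  have "pairwise orthogonal (v ` I)"
    by (auto simp: pairwise_def orthogonal_def v_kl)
  moreover have "0 \<notin> v ` I"
    using v_kl by fastforce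
  ultimately have "independent (v ` I)"
    by (rule pairwise_orthogonal_independent)
  moreover have "dim (UNIV :: 'a set) \<le> card (v ` I)"
    using inj card by (simp add: card_image)
  ultimately show ?thesis
    using card_ge_dim_independent[of "v ` I" UNIV] by auto
qed

lemma linear_inner_rotation:
  assumes "linear f"
  shows "f (c *\<^sub>R u + s *\<^sub>R v) \<bullet> (c *\<^sub>R u + s *\<^sub>R v)
           + f ((- s) *\<^sub>R u + c *\<^sub>R v) \<bullet> ((- s) *\<^sub>R u + c *\<^sub>R v)
         = (c\<^sup>2 + s\<^sup>2) * (f u \<bullet> u + f v \<bullet> v)"
proof -
  interpret linear f by fact
  show ?thesis
    by (simp only: add scale inner_add_left inner_add_right inner_scaleR_left inner_scaleR_right)
       (simp add: power2_eq_square algebra_simps)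
qed

lemma bounded_linear_inner_level_on_circle:
  assumes f: "bounded_linear f" and u: "f u \<bullet> u \<le> y" and v: "y \<le> f v \<bullet> v"
  obtains c s where "c\<^sup>2 + s\<^sup>2 = 1" "f (c *\<^sub>R u + s *\<^sub>R v) \<bullet> (c *\<^sub>R u + s *\<^sub>R v) = y"
proof -
  define g where "g t = f (cos t *\<^sub>R u + sin t *\<^sub>R v) \<bullet> (cos t *\<^sub>R u + sin t *\<^sub>R v)" for t
  have "isCont g t" for t
    unfolding g_def by (intro continuous_intros bounded_linear.isCont[OF f])
  moreover have "g 0 \<le> y" "y \<le> g (pi / 2)"
    using u v by (simp_all add: g_def)
  ultimately obtain t where "g t = y"
    using IVT[of g 0 y "pi / 2"] by auto
  then show thesis
    by (intro that[of "cos t" "sin t"]) (simp_all add: g_def)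
qed

lemma sum_eq_card_below_above:
  fixes g :: "'i \<Rightarrow> real"
  assumes I: "finite I" and sum: "sum g I = card I" and k: "k \<in> I" "g k \<noteq> 1"
  obtains i j where "i \<in> I" "g i < 1" "j \<in> I" "1 < g j"
proof -
  have "\<exists>i\<in>I. g i < 1"
  proof (rule ccontr)
    assume "\<not> ?thesis"
    then have "\<forall>i\<in>I. 1 \<le> g i" by auto
    moreover from this have "1 < g k" using k by force
    ultimately have "(\<Sum>i\<in>I. 1) < sum g I"
      using I k by (intro sum_strict_mono_ex1) auto
    with sum show False by simp
  qed
  moreover have "\<exists>j\<in>I. 1 < g j"
  proof (rule ccontr)
    assume "\<not> ?thesis"
    then have "\<forall>j\<in>I. g j \<le> 1" by auto
    moreover from this have "g k < 1" using k by force
    ultimately have "sum g I < (\<Sum>i\<in>I. 1)"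
      using I k by (intro sum_strict_mono_ex1) auto
    with sum show False by simp
  qed
  ultimately show thesis
    using that by blast
qed

lemma orthonormal_on_rotation_step:
  assumes f: "bounded_linear f" and I: "finite I" and w: "orthonormal_on I w"
    and sum: "(\<Sum>k\<in>I. f (w k) \<bullet> w k) = card I"
    and k: "k \<in> I" "f (w k) \<bullet> w k \<noteq> 1"
  obtains w' where "orthonormal_on I w'" "(\<Sum>k\<in>I. f (w' k) \<bullet> w' k) = card I"
    "{k\<in>I. f (w' k) \<bullet> w' k \<noteq> 1} \<subset> {k\<in>I. f (w k) \<bullet> w k \<noteq> 1}"
proof -
  obtain i j where i: "i \<in> I" "f (w i) \<bullet> w i < 1" and j: "j \<in> I" "1 < f (w j) \<bullet> w j"
    using sum_eq_card_below_above[OF I sum k] .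
  then have "i \<noteq> j" by auto
  obtain c s where cs: "c\<^sup>2 + s\<^sup>2 = 1"
    and level: "f (c *\<^sub>R w i + s *\<^sub>R w j) \<bullet> (c *\<^sub>R w i + s *\<^sub>R w j) = 1"
    by (rule bounded_linear_inner_level_on_circle[OF f, of "w i" 1 "w j"]) (use i j in auto)
  define w' where "w' = w(i := c *\<^sub>R w i + s *\<^sub>R w j, j := (- s) *\<^sub>R w i + c *\<^sub>R w j)"
  have "orthonormal_on I w'"
    unfolding w'_def using orthonormal_on_rotate[OF w i(1) j(1) \<open>i \<noteq> j\<close> cs] .
  moreover have "(\<Sum>k\<in>I. f (w' k) \<bullet> w' k) = card I"
  proof -
    let ?q = "\<lambda>x. f x \<bullet> x"
    have j_I: "j \<in> I - {i}" and I_ij: "I - {i} - {j} = I - {i, j}"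
      using j \<open>i \<noteq> j\<close> by auto
    have split: "(\<Sum>k\<in>I. ?q (u k)) = ?q (u i) + ?q (u j) + (\<Sum>k\<in>I - {i, j}. ?q (u k))" for u
      using sum.remove[OF I i(1), of "\<lambda>k. ?q (u k)"] sum.remove[OF _ j_I, of "\<lambda>k. ?q (u k)"] I
      unfolding I_ij by simp
    have "?q (w' i) + ?q (w' j) = ?q (w i) + ?q (w j)"
      using linear_inner_rotation[OF bounded_linear.linear[OF f], of c "w i" s "w j"] cs \<open>i \<noteq> j\<close>
      by (simp add: w'_def)
    moreover have "(\<Sum>k\<in>I - {i, j}. ?q (w' k)) = (\<Sum>k\<in>I - {i, j}. ?q (w k))"
      by (simp add: w'_def)
    ultimately show ?thesis
      using sum split[of w] split[of w'] by simp
  qed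
  moreover have "{k\<in>I. f (w' k) \<bullet> w' k \<noteq> 1} \<subset> {k\<in>I. f (w k) \<bullet> w k \<noteq> 1}"
  proof
    have "w' k = w k" if "k \<noteq> i" "k \<noteq> j" for k
      using that by (simp add: w'_def)
    then show "{k\<in>I. f (w' k) \<bullet> w' k \<noteq> 1} \<subseteq> {k\<in>I. f (w k) \<bullet> w k \<noteq> 1}"
      using j by (auto simp: w'_def level)
    have "f (w' i) \<bullet> w' i = 1"
      using \<open>i \<noteq> j\<close> by (simp add: w'_def level)
    then show "{k\<in>I. f (w' k) \<bullet> w' k \<noteq> 1} \<noteq> {k\<in>I. f (w k) \<bullet> w k \<noteq> 1}"
      using i by (metis (mono_tags, lifting) less_irrefl mem_Collect_eq)
  qed
  ultimately show thesis
    using that by blast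
qed

lemma exists_orthonormal_on_level_one:
  assumes f: "bounded_linear f" and I: "finite I"
  shows "orthonormal_on I w \<Longrightarrow> (\<Sum>k\<in>I. f (w k) \<bullet> w k) = card I \<Longrightarrow>
    \<exists>w'. orthonormal_on I w' \<and> (\<forall>k\<in>I. f (w' k) \<bullet> w' k = 1)"
proof (induction "card {k\<in>I. f (w k) \<bullet> w k \<noteq> 1}" arbitrary: w rule: less_induct)
  case less
  show ?case
  proof (cases "\<forall>k\<in>I. f (w k) \<bullet> w k = 1")
    case True
    with less.prems show ?thesis by blast
  next
    case False
    then obtain k where "k \<in> I" "f (w k) \<bullet> w k \<noteq> 1" by blast
    then obtain w' where w': "orthonormal_on I w'" "(\<Sum>k\<in>I. f (w' k) \<bullet> w' k) = card I"
      "{k\<in>I. f (w' k) \<bullet> w' k \<noteq> 1} \<subset> {k\<in>I. f (w k) \<bullet> w k \<noteq> 1}"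
      using orthonormal_on_rotation_step[OF f I less.prems] by blast
    then have "card {k\<in>I. f (w' k) \<bullet> w' k \<noteq> 1} < card {k\<in>I. f (w k) \<bullet> w k \<noteq> 1}"
      using I by (intro psubset_card_mono) auto
    then show ?thesis
      using less.hyps w'(1,2) by blast
  qed
qed

theorem lemma4:
  fixes a :: "real ^ 'n"
  assumes nonneg: "\<And>j. a $ j \<ge> 0"
    and sum_a: "(\<Sum>j\<in>UNIV. a $ j) = real CARD('n)"
  shows "\<exists>v :: 'n \<Rightarrow> real ^ 'n.
           (\<forall>i j. v i \<bullet> v j = (if i = j then 1 else 0)) \<and>
           span (range v) = UNIV \<and>
           (\<forall>i. (\<Sum>j\<in>UNIV. a $ j * (v i $ j)^2) = 1)"
proof -
  have f: "bounded_linear (\<lambda>x. a * x)"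
    by (simp add: linear_conv_bounded_linear[symmetric] linear_iff vec_eq_iff algebra_simps)
  have q: "(a * x) \<bullet> x = (\<Sum>j\<in>UNIV. a $ j * (x $ j)^2)" for x
    by (simp add: inner_vec_def power2_eq_square mult.assoc)
  have "orthonormal_on UNIV (\<lambda>i. axis i 1 :: real ^ 'n)"
    by (simp add: orthonormal_on_def inner_axis_axis)
  moreover have "(\<Sum>i\<in>UNIV. (a * axis i 1) \<bullet> axis i 1) = CARD('n)"
    using sum_a by (simp add: inner_axis)
  ultimately obtain v :: "'n \<Rightarrow> real ^ 'n"
    where v: "orthonormal_on UNIV v" "\<forall>i. (a * v i) \<bullet> v i = 1"
    using exists_orthonormal_on_level_one[OF f finite] by blast
  moreover have "span (range v) = UNIV"
    using orthonormal_on_span_UNIV[OF v(1)] by simp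
  ultimately show ?thesis
    unfolding orthonormal_on_def q[symmetric] by blast
qed

end
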